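(* Every $m$-step decodable POMDP has, for every $h\in[H-m+1]$, the set $\mathcal{U}_h=\mathcal{O}\times(\mathcal{A}\times\mathcal{O})^{m-1}$ of all length-$m$ tests as a core test set.
   Context: An episodic POMDP has finite state space $\mathcal{S}$, finite $\mathcal{O},\mathcal{A}$, horizon $H$, initial distribution, transitions $\mathbb{T}_h(s'\mid s,a)$ and emissions $\mathbb{O}_h(o\mid s)$. It is $m$-step decodable if there are (unknown) maps $\phi_{\mathrm{dec},h}$ such that for every reachable trajectory, $s_h=\phi_{\mathrm{dec},h}(z_h)$ for all $h\in[H]$, where $z_h=(o_{\max\{h-m+1,1\}},a_{\max\{h-m+1,1\}},\dots,o_{h-1},a_{h-1},o_h)$. Histories $\tau_{h-1}=(o_1,a_1,\dots,o_{h-1},a_{h-1})$. A test starting at step $h$ is $t=(o_h,\dots,o_{h+W-1},a_h,\dots,a_{h+W-2})$; $\mathbb{P}(t\mid\tau_{h-1})$ is the probability of observing $o_{h:h+W-1}$ when executing $a_{h:h+W-2}$ after $\tau_{h-1}$ ($0$ if unreachable). A set $\mathcal{U}_h$ of tests starting at $h$ is a core test set if for every test $t$ starting at $h$ there is a history-independent $m_{t,h}\in\mathbb{R}^{|\mathcal{U}_h|}$ with $\mathbb{P}(t\mid\tau_{h-1})=\langle m_{t,h},[\mathbb{P}(u\mid\tau_{h-1})]_{u\in\mathcal{U}_h}\rangle$ for all $\tau_{h-1}$. *)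

theory Defs
  imports "HOL-Analysis.Analysis"
begin

text \<open>Steps are numbered 1..H.
  mu s      : initial distribution over s_1
  Tr h s a s' : transition probability T_h(s' | s, a)
  Em h s ob   : emission probability O_h(ob | s)\<close>

definition is_pomdp ::
  "nat \<Rightarrow> ('s::finite \<Rightarrow> real) \<Rightarrow> (nat \<Rightarrow> 's \<Rightarrow> 'a::finite \<Rightarrow> 's \<Rightarrow> real)
   \<Rightarrow> (nat \<Rightarrow> 's \<Rightarrow> 'o::finite \<Rightarrow> real) \<Rightarrow> bool" where
  "is_pomdp H mu Tr Em \<longleftrightarrow>
     (\<forall>s. 0 \<le> mu s) \<and> (\<Sum>s\<in>UNIV. mu s) = 1 \<and>
     (\<forall>h s a s'. 1 \<le> h \<and> h < H \<longrightarrow> 0 \<le> Tr h s a s') \<and>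
     (\<forall>h s a. 1 \<le> h \<and> h < H \<longrightarrow> (\<Sum>s'\<in>UNIV. Tr h s a s') = 1) \<and>
     (\<forall>h s ob. 1 \<le> h \<and> h \<le> H \<longrightarrow> 0 \<le> Em h s ob) \<and>
     (\<forall>h s. 1 \<le> h \<and> h \<le> H \<longrightarrow> (\<Sum>ob\<in>UNIV. Em h s ob) = 1)"

text \<open>A full trajectory (s_1,o_1,a_1,...,s_H,o_H) is given by lists ss (length H),
  os (length H), as (length H-1). It is reachable if it has positive probability.\<close>

definition reachable_traj ::
  "nat \<Rightarrow> ('s::finite \<Rightarrow> real) \<Rightarrow> (nat \<Rightarrow> 's \<Rightarrow> 'a::finite \<Rightarrow> 's \<Rightarrow> real)
   \<Rightarrow> (nat \<Rightarrow> 's \<Rightarrow> 'o::finite \<Rightarrow> real) \<Rightarrow> 's list \<Rightarrow> 'o list \<Rightarrow> 'a list \<Rightarrow> bool" where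
  "reachable_traj H mu Tr Em ss os as \<longleftrightarrow>
     length ss = H \<and> length os = H \<and> length as = H - 1 \<and> 0 < H \<and>
     0 < mu (ss ! 0) \<and>
     (\<forall>i<H. 0 < Em (Suc i) (ss ! i) (os ! i)) \<and>
     (\<forall>i. i + 1 < H \<longrightarrow> 0 < Tr (Suc i) (ss ! i) (as ! i) (ss ! Suc i))"

text \<open>The decoding window z_h = (o_{max(h-m+1,1)}, a_{max(h-m+1,1)}, ..., o_{h-1}, a_{h-1}, o_h),
  represented as the list of (observation, action) pairs together with the last observation o_h.\<close>

definition window_pairs :: "nat \<Rightarrow> nat \<Rightarrow> 'o list \<Rightarrow> 'a list \<Rightarrow> ('o \<times> 'a) list" where
  "window_pairs m h os as = drop (h - m) (take (h - 1) (zip os as))"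

definition m_step_decodable ::
  "nat \<Rightarrow> nat \<Rightarrow> ('s::finite \<Rightarrow> real) \<Rightarrow> (nat \<Rightarrow> 's \<Rightarrow> 'a::finite \<Rightarrow> 's \<Rightarrow> real)
   \<Rightarrow> (nat \<Rightarrow> 's \<Rightarrow> 'o::finite \<Rightarrow> real) \<Rightarrow> bool" where
  "m_step_decodable m H mu Tr Em \<longleftrightarrow>
     (\<exists>dec :: nat \<Rightarrow> ('o \<times> 'a) list \<Rightarrow> 'o \<Rightarrow> 's.
        \<forall>ss os as. reachable_traj H mu Tr Em ss os as \<longrightarrow>
          (\<forall>h. 1 \<le> h \<and> h \<le> H \<longrightarrow>
             ss ! (h - 1) = dec h (window_pairs m h os as) (os ! (h - 1))))"

text \<open>Forward (unnormalised) belief propagation: starting from weight b over s_h,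
  process pairs (o_h,a_h), (o_{h+1},a_{h+1}), ...\<close>

fun fwd :: "(nat \<Rightarrow> 's::finite \<Rightarrow> 'a \<Rightarrow> 's \<Rightarrow> real) \<Rightarrow> (nat \<Rightarrow> 's \<Rightarrow> 'o \<Rightarrow> real)
             \<Rightarrow> nat \<Rightarrow> ('s \<Rightarrow> real) \<Rightarrow> ('o \<times> 'a) list \<Rightarrow> ('s \<Rightarrow> real)" where
  "fwd Tr Em h b [] = b"
| "fwd Tr Em h b ((ob, a) # xs) =
     fwd Tr Em (Suc h) (\<lambda>s'. \<Sum>s\<in>UNIV. b s * Em h s ob * Tr h s a s') xs"

text \<open>A test starting at h of length W, t = (o_h,...,o_{h+W-1}, a_h,...,a_{h+W-2}),
  is represented as the list of pairs [(o_h,a_h),...,(o_{h+W-2},a_{h+W-2})] and the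
  final observation o_{h+W-1}; so W = length (fst t) + 1.
  A history tau_{h-1} = (o_1,a_1,...,o_{h-1},a_{h-1}) is a list of h-1 pairs.\<close>

type_synonym ('o, 'a) test = "('o \<times> 'a) list \<times> 'o"

definition test_weight :: "(nat \<Rightarrow> 's::finite \<Rightarrow> 'a \<Rightarrow> 's \<Rightarrow> real) \<Rightarrow> (nat \<Rightarrow> 's \<Rightarrow> 'o \<Rightarrow> real)
             \<Rightarrow> nat \<Rightarrow> ('s \<Rightarrow> real) \<Rightarrow> ('o, 'a) test \<Rightarrow> real" where
  "test_weight Tr Em h b t =
     (\<Sum>s\<in>UNIV. fwd Tr Em h b (fst t) s * Em (h + length (fst t)) s (snd t))"

text \<open>P(t | tau_{h-1}) with h = length tau + 1: probability of observing the test's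
  observations when executing its actions after history tau; 0 if tau is unreachable
  (i.e. the observations of tau have probability 0 under its actions).\<close>

definition test_prob :: "('s::finite \<Rightarrow> real) \<Rightarrow> (nat \<Rightarrow> 's \<Rightarrow> 'a \<Rightarrow> 's \<Rightarrow> real)
             \<Rightarrow> (nat \<Rightarrow> 's \<Rightarrow> 'o \<Rightarrow> real) \<Rightarrow> ('o, 'a) test \<Rightarrow> ('o \<times> 'a) list \<Rightarrow> real" where
  "test_prob mu Tr Em t tau =
     (let b = fwd Tr Em 1 mu tau; Z = (\<Sum>s\<in>UNIV. b s)
      in if Z = 0 then 0 else test_weight Tr Em (Suc (length tau)) b t / Z)"

definition core_test_set :: "nat \<Rightarrow> ('s::finite \<Rightarrow> real) \<Rightarrow> (nat \<Rightarrow> 's \<Rightarrow> 'a::finite \<Rightarrow> 's \<Rightarrow> real)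
             \<Rightarrow> (nat \<Rightarrow> 's \<Rightarrow> 'o::finite \<Rightarrow> real) \<Rightarrow> nat \<Rightarrow> ('o, 'a) test set \<Rightarrow> bool" where
  "core_test_set H mu Tr Em h U \<longleftrightarrow>
     finite U \<and>
     (\<forall>t. h + length (fst t) \<le> H \<longrightarrow>
        (\<exists>mt :: ('o, 'a) test \<Rightarrow> real.
           \<forall>tau. length tau = h - 1 \<longrightarrow>
             test_prob mu Tr Em t tau = (\<Sum>u\<in>U. mt u * test_prob mu Tr Em u tau)))"

definition all_tests_len :: "nat \<Rightarrow> ('o, 'a) test set" where
  "all_tests_len m = {t. length (fst t) = m - 1}"

end

(*
  P(t | tau) is the weight of t under the unnormalised belief b reached after the history tau,
  divided by the total mass of b, so it suffices to write test weights as linear combinations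
  of weights of length-m tests, with coefficients independent of b.

  A test shorter than m is, by stochasticity of transitions and emissions, the sum over the next
  observation of its extensions by one step (with an arbitrary action); by induction it is a sum
  of length-m tests. A test of length at least m starts with a length-m test whose window
  decodes the state at the end of that window: any state of positive weight there lies on a
  positive-probability run, which extends to a reachable trajectory of full length. Hence the
  belief at that step is concentrated on the decoded state, and the weight of the whole test is
  the weight of its length-m prefix times a factor depending only on the test.
*)
theory Submission
  imports Defs
begin

lemma sum_posE:
  fixes f :: "'x \<Rightarrow> real"
  assumes "0 < sum f A"
  obtains x where "x \<in> A" "0 < f x"
  using assms sum_nonpos[of A f] by (meson not_le)

lemma sum_mult_concentrated:
  fixes X G :: "'x \<Rightarrow> 'r::comm_semiring_0"
  assumes "finite A" "x \<in> A" "\<And>y. y \<in> A \<Longrightarrow> y \<noteq> x \<Longrightarrow> X y = 0"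
  shows "(\<Sum>y\<in>A. X y * G y) = G x * (\<Sum>y\<in>A. X y)"
  using assms sum.mono_neutral_left[of A "{x}" "\<lambda>y. X y * G y"] sum.mono_neutral_left[of A "{x}" X]
  by (simp add: mult.commute)

lemma fwd_append:
  "fwd Tr Em k b (xs @ ys) = fwd Tr Em (k + length xs) (fwd Tr Em k b xs) ys"
  by (induction xs arbitrary: k b) auto

lemma fwd_sum_weights:
  fixes g :: "'i \<Rightarrow> 's::finite \<Rightarrow> real"
  shows "fwd Tr Em k (\<lambda>x. \<Sum>i\<in>I. f i * g i x) xs y = (\<Sum>i\<in>I. f i * fwd Tr Em k (g i) xs y)"
proof (induction xs arbitrary: k g)
  case Nil
  then show ?case by simp
next
  case (Cons p xs)
  obtain ob a where p: "p = (ob, a)" by (cases p)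
  have "(\<lambda>s'. \<Sum>x\<in>UNIV. (\<Sum>i\<in>I. f i * g i x) * Em k x ob * Tr k x a s')
      = (\<lambda>s'. \<Sum>i\<in>I. f i * (\<Sum>x\<in>UNIV. g i x * Em k x ob * Tr k x a s'))"
    by (auto simp: sum_distrib_left sum_distrib_right mult.assoc intro!: ext sum.swap)
  then show ?case
    using Cons[of "Suc k" "\<lambda>i s'. \<Sum>x\<in>UNIV. g i x * Em k x ob * Tr k x a s'"] by (simp add: p)
qed

lemma fwd_nonneg:
  fixes Tr :: "nat \<Rightarrow> 's::finite \<Rightarrow> 'a::finite \<Rightarrow> 's \<Rightarrow> real"
    and Em :: "nat \<Rightarrow> 's \<Rightarrow> 'o::finite \<Rightarrow> real"
  assumes P: "is_pomdp H mu Tr Em"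
  shows "(\<And>s. 0 \<le> b s) \<Longrightarrow> 1 \<le> k \<Longrightarrow> k + length xs \<le> H \<Longrightarrow> 0 \<le> fwd Tr Em k b xs s"
proof (induction xs arbitrary: k b)
  case Nil
  then show ?case by simp
next
  case (Cons p xs)
  obtain ob a where p: "p = (ob, a)" by (cases p)
  have "0 \<le> (\<Sum>s\<in>UNIV. b s * Em k s ob * Tr k s a s')" for s'
    using Cons.prems P unfolding is_pomdp_def by (auto intro!: sum_nonneg)
  then show ?case using Cons by (simp add: p)
qed

lemma test_weight_append:
  "test_weight Tr Em h b (ps @ qs, ob) = test_weight Tr Em (h + length ps) (fwd Tr Em h b ps) (qs, ob)"
  by (simp add: test_weight_def fwd_append add.assoc)

lemma test_weight_Nil: "test_weight Tr Em h b ([], ob) = (\<Sum>s\<in>UNIV. b s * Em h s ob)"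
  by (simp add: test_weight_def)

lemma test_weight_Cons:
  "test_weight Tr Em h b ((o1, a) # ps, ob) =
     (\<Sum>s\<in>UNIV. b s * Em h s o1 * test_weight Tr Em (Suc h) (Tr h s a) (ps, ob))"
proof -
  have "test_weight Tr Em h b ((o1, a) # ps, ob) =
      (\<Sum>s'\<in>UNIV. (\<Sum>s\<in>UNIV. b s * Em h s o1 * fwd Tr Em (Suc h) (Tr h s a) ps s')
                   * Em (Suc (h + length ps)) s' ob)"
    unfolding test_weight_def using fwd_sum_weights[of Tr Em "Suc h" "\<lambda>s. b s * Em h s o1" "\<lambda>s. Tr h s a"]
    by simp
  also have "\<dots> = (\<Sum>s\<in>UNIV. b s * Em h s o1 * test_weight Tr Em (Suc h) (Tr h s a) (ps, ob))"
    unfolding test_weight_def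
    by (simp add: sum_distrib_left sum_distrib_right mult.assoc) (rule sum.swap)
  finally show ?thesis .
qed

lemma test_weight_sum_observations:
  fixes Tr :: "nat \<Rightarrow> 's::finite \<Rightarrow> 'a::finite \<Rightarrow> 's \<Rightarrow> real"
    and Em :: "nat \<Rightarrow> 's \<Rightarrow> 'o::finite \<Rightarrow> real"
  assumes "is_pomdp H mu Tr Em" "1 \<le> k" "k \<le> H"
  shows "(\<Sum>ob\<in>UNIV. test_weight Tr Em k b ([], ob)) = (\<Sum>s\<in>UNIV. b s)"
proof -
  have "(\<Sum>ob\<in>UNIV. test_weight Tr Em k b ([], ob)) = (\<Sum>s\<in>UNIV. b s * (\<Sum>ob\<in>UNIV. Em k s ob))"
    unfolding test_weight_Nil sum_distrib_left by (rule sum.swap)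
  also have "\<dots> = (\<Sum>s\<in>UNIV. b s)"
    using assms unfolding is_pomdp_def by simp
  finally show ?thesis .
qed

lemma test_weight_marginal:
  fixes Tr :: "nat \<Rightarrow> 's::finite \<Rightarrow> 'a::finite \<Rightarrow> 's \<Rightarrow> real"
    and Em :: "nat \<Rightarrow> 's \<Rightarrow> 'o::finite \<Rightarrow> real"
  assumes P: "is_pomdp H mu Tr Em" and "1 \<le> h" "h + length ps < H"
  shows "test_weight Tr Em h b (ps, ob) = (\<Sum>o'\<in>UNIV. test_weight Tr Em h b (ps @ [(ob, a)], o'))"
proof -
  define k where "k = h + length ps"
  define X where "X s = fwd Tr Em h b ps s * Em k s ob" for s
  have row: "(\<Sum>s'\<in>UNIV. Tr k s a s') = 1" for s
    using assms unfolding is_pomdp_def k_def by simp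
  have "(\<Sum>o'\<in>UNIV. test_weight Tr Em h b (ps @ [(ob, a)], o'))
      = (\<Sum>s\<in>UNIV. X s * (\<Sum>o'\<in>UNIV. test_weight Tr Em (Suc k) (Tr k s a) ([], o')))"
    unfolding test_weight_append test_weight_Cons X_def k_def sum_distrib_left by (rule sum.swap)
  also have "\<dots> = (\<Sum>s\<in>UNIV. X s)"
    using test_weight_sum_observations[OF P, of "Suc k"] assms row by (simp add: k_def)
  also have "\<dots> = test_weight Tr Em h b (ps, ob)"
    using test_weight_append[of Tr Em h b ps "[]" ob] by (simp add: test_weight_Nil X_def k_def)
  finally show ?thesis ..
qed

definition test_in_span ::
  "(nat \<Rightarrow> 's::finite \<Rightarrow> 'a \<Rightarrow> 's \<Rightarrow> real) \<Rightarrow> (nat \<Rightarrow> 's \<Rightarrow> 'o \<Rightarrow> real) \<Rightarrow> nat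
   \<Rightarrow> ('s \<Rightarrow> real) set \<Rightarrow> ('o, 'a) test set \<Rightarrow> ('o, 'a) test \<Rightarrow> bool" where
  "test_in_span Tr Em h B U t \<longleftrightarrow>
     (\<exists>c. \<forall>b\<in>B. test_weight Tr Em h b t = (\<Sum>u\<in>U. c u * test_weight Tr Em h b u))"

lemma test_in_span_multiple:
  assumes "finite U" "u \<in> U"
    and "\<And>b. b \<in> B \<Longrightarrow> test_weight Tr Em h b t = r * test_weight Tr Em h b u"
  shows "test_in_span Tr Em h B U t"
  unfolding test_in_span_def
proof (intro exI[of _ "\<lambda>v. if v = u then r else 0"] ballI)
  fix b assume "b \<in> B"
  have "(\<Sum>v\<in>U. (if v = u then r else 0) * test_weight Tr Em h b v)
      = (\<Sum>v\<in>U. if v = u then r * test_weight Tr Em h b v else 0)"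
    by (rule sum.cong) auto
  then show "test_weight Tr Em h b t = (\<Sum>v\<in>U. (if v = u then r else 0) * test_weight Tr Em h b v)"
    using assms \<open>b \<in> B\<close> by simp
qed

lemma test_in_span_sum:
  assumes "\<And>i. i \<in> I \<Longrightarrow> test_in_span Tr Em h B U (ts i)"
    and "\<And>b. b \<in> B \<Longrightarrow> test_weight Tr Em h b t = (\<Sum>i\<in>I. test_weight Tr Em h b (ts i))"
  shows "test_in_span Tr Em h B U t"
proof -
  have "\<forall>i\<in>I. \<exists>ci. \<forall>b\<in>B. test_weight Tr Em h b (ts i) = (\<Sum>u\<in>U. ci u * test_weight Tr Em h b u)"
    using assms(1) unfolding test_in_span_def by blast
  then obtain c where c: "\<forall>i\<in>I. \<forall>b\<in>B.
      test_weight Tr Em h b (ts i) = (\<Sum>u\<in>U. c i u * test_weight Tr Em h b u)"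
    by (rule bchoice[THEN exE])
  have "test_weight Tr Em h b t = (\<Sum>u\<in>U. (\<Sum>i\<in>I. c i u) * test_weight Tr Em h b u)" if "b \<in> B" for b
  proof -
    have "test_weight Tr Em h b t = (\<Sum>i\<in>I. \<Sum>u\<in>U. c i u * test_weight Tr Em h b u)"
      unfolding assms(2)[OF that] by (rule sum.cong[OF refl]) (use c that in blast)
    also have "\<dots> = (\<Sum>u\<in>U. (\<Sum>i\<in>I. c i u) * test_weight Tr Em h b u)"
      unfolding sum_distrib_right by (rule sum.swap)
    finally show ?thesis .
  qed
  then show ?thesis unfolding test_in_span_def by (intro exI[of _ "\<lambda>u. \<Sum>i\<in>I. c i u"]) blast
qed

lemma core_test_set_if_in_span:
  fixes U :: "('o::finite, 'a::finite) test set"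
  assumes "1 \<le> h" "finite U"
    and "\<And>t. h + length (fst t) \<le> H \<Longrightarrow>
           test_in_span Tr Em h (fwd Tr Em 1 mu ` {tau. length tau = h - 1}) U t"
  shows "core_test_set H mu Tr Em h U"
  unfolding core_test_set_def
proof (intro conjI allI impI)
  fix t :: "('o, 'a) test" assume "h + length (fst t) \<le> H"
  then obtain c where c: "\<forall>b\<in>fwd Tr Em 1 mu ` {tau. length tau = h - 1}.
      test_weight Tr Em h b t = (\<Sum>u\<in>U. c u * test_weight Tr Em h b u)"
    using assms(3) unfolding test_in_span_def by blast
  have "test_prob mu Tr Em t tau = (\<Sum>u\<in>U. c u * test_prob mu Tr Em u tau)"
    if tau: "length tau = h - 1" for tau
  proof -
    have "Suc (length tau) = h" using tau assms(1) by simp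
    moreover have "test_weight Tr Em h (fwd Tr Em 1 mu tau) t =
        (\<Sum>u\<in>U. c u * test_weight Tr Em h (fwd Tr Em 1 mu tau) u)"
      using c tau by blast
    ultimately show ?thesis
      unfolding test_prob_def Let_def by (simp add: sum_divide_distrib)
  qed
  then show "\<exists>mt. \<forall>tau. length tau = h - 1 \<longrightarrow>
      test_prob mu Tr Em t tau = (\<Sum>u\<in>U. mt u * test_prob mu Tr Em u tau)" by (intro exI[of _ c]) blast
qed (rule assms(2))

lemma finite_all_tests_len: "finite (all_tests_len m :: ('o::finite, 'a::finite) test set)"
proof -
  have "all_tests_len m = {xs :: ('o \<times> 'a) list. set xs \<subseteq> UNIV \<and> length xs = m - 1} \<times> UNIV"
    unfolding all_tests_len_def by auto
  then show ?thesis using finite_lists_length_eq[of "UNIV :: ('o \<times> 'a) set" "m - 1"] by simp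
qed

lemma short_test_in_span:
  fixes Tr :: "nat \<Rightarrow> 's::finite \<Rightarrow> 'a::finite \<Rightarrow> 's \<Rightarrow> real"
    and Em :: "nat \<Rightarrow> 's \<Rightarrow> 'o::finite \<Rightarrow> real"
    and t :: "('o, 'a) test"
  assumes P: "is_pomdp H mu Tr Em" and "1 \<le> h" "h + m \<le> H + 1" "length (fst t) < m"
  shows "test_in_span Tr Em h B (all_tests_len m) t"
  using assms(4)
proof (induction "m - 1 - length (fst t)" arbitrary: t)
  case 0
  then have "t \<in> all_tests_len m" by (simp add: all_tests_len_def)
  then show ?case by (rule test_in_span_multiple[OF finite_all_tests_len, where r = 1]) simp
next
  case (Suc d)
  obtain ps ob where t: "t = (ps, ob)" by (cases t)
  obtain a :: 'a where True by simp
  show ?case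
  proof (rule test_in_span_sum)
    show "test_in_span Tr Em h B (all_tests_len m) (ps @ [(ob, a)], o')" for o'
      using Suc t by (intro Suc.hyps) auto
    show "test_weight Tr Em h b t = (\<Sum>o'\<in>UNIV. test_weight Tr Em h b (ps @ [(ob, a)], o'))" for b
      unfolding t using Suc t assms by (intro test_weight_marginal[OF P]) auto
  qed
qed

definition decoder ::
  "nat \<Rightarrow> nat \<Rightarrow> ('s::finite \<Rightarrow> real) \<Rightarrow> (nat \<Rightarrow> 's \<Rightarrow> 'a::finite \<Rightarrow> 's \<Rightarrow> real)
   \<Rightarrow> (nat \<Rightarrow> 's \<Rightarrow> 'o::finite \<Rightarrow> real) \<Rightarrow> (nat \<Rightarrow> ('o \<times> 'a) list \<Rightarrow> 'o \<Rightarrow> 's) \<Rightarrow> bool" where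
  "decoder m H mu Tr Em dec \<longleftrightarrow>
     (\<forall>ss os as. reachable_traj H mu Tr Em ss os as \<longrightarrow>
        (\<forall>h. 1 \<le> h \<and> h \<le> H \<longrightarrow> ss ! (h - 1) = dec h (window_pairs m h os as) (os ! (h - 1))))"

(* S i, Ob i and Ac i are the state, observation and action at step i + 1. *)
definition positive_run ::
  "('s \<Rightarrow> real) \<Rightarrow> (nat \<Rightarrow> 's \<Rightarrow> 'a \<Rightarrow> 's \<Rightarrow> real) \<Rightarrow> (nat \<Rightarrow> 's \<Rightarrow> 'o \<Rightarrow> real)
   \<Rightarrow> (nat \<Rightarrow> 's) \<Rightarrow> (nat \<Rightarrow> 'o) \<Rightarrow> (nat \<Rightarrow> 'a) \<Rightarrow> nat \<Rightarrow> bool" where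
  "positive_run mu Tr Em S Ob Ac j \<longleftrightarrow>
     0 < mu (S 0) \<and> (\<forall>i<j. 0 < Em (Suc i) (S i) (Ob i)) \<and>
     (\<forall>i. i + 1 < j \<longrightarrow> 0 < Tr (Suc i) (S i) (Ac i) (S (Suc i)))"

lemma reachable_traj_of_positive_run:
  assumes "positive_run mu Tr Em S Ob Ac H" "0 < H"
  shows "reachable_traj H mu Tr Em (map S [0..<H]) (map Ob [0..<H]) (map Ac [0..<H - 1])"
  using assms unfolding reachable_traj_def positive_run_def by auto

lemma positive_run_Suc:
  fixes Tr :: "nat \<Rightarrow> 's::finite \<Rightarrow> 'a::finite \<Rightarrow> 's \<Rightarrow> real"
    and Em :: "nat \<Rightarrow> 's \<Rightarrow> 'o::finite \<Rightarrow> real"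
  assumes P: "is_pomdp H mu Tr Em" and run: "positive_run mu Tr Em S Ob Ac j" and j: "1 \<le> j" "j < H"
  obtains s o' where "positive_run mu Tr Em (S(j := s)) (Ob(j := o')) Ac (Suc j)"
proof -
  have "0 < (\<Sum>s\<in>UNIV. Tr j (S (j - 1)) (Ac (j - 1)) s)"
    using P j unfolding is_pomdp_def by simp
  then obtain s where s: "0 < Tr j (S (j - 1)) (Ac (j - 1)) s" by (rule sum_posE)
  have "0 < (\<Sum>o'\<in>UNIV. Em (Suc j) s o')"
    using P j unfolding is_pomdp_def by simp
  then obtain o' where o': "0 < Em (Suc j) s o'" by (rule sum_posE)
  have "positive_run mu Tr Em (S(j := s)) (Ob(j := o')) Ac (Suc j)"
    unfolding positive_run_def
  proof (intro conjI allI impI)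
    show "0 < mu ((S(j := s)) 0)" using run j unfolding positive_run_def by auto
    show "0 < Em (Suc i) ((S(j := s)) i) ((Ob(j := o')) i)" if "i < Suc j" for i
      using run o' that unfolding positive_run_def by (cases "i < j") (auto simp: less_Suc_eq)
    show "0 < Tr (Suc i) ((S(j := s)) i) (Ac i) ((S(j := s)) (Suc i))" if "i + 1 < Suc j" for i
      using run s that j unfolding positive_run_def by (cases "i + 1 < j") (auto simp: less_Suc_eq)
  qed
  then show ?thesis by (rule that)
qed

lemma positive_run_extend:
  fixes Tr :: "nat \<Rightarrow> 's::finite \<Rightarrow> 'a::finite \<Rightarrow> 's \<Rightarrow> real"
    and Em :: "nat \<Rightarrow> 's \<Rightarrow> 'o::finite \<Rightarrow> real"
  assumes P: "is_pomdp H mu Tr Em"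
  shows "positive_run mu Tr Em S Ob Ac j \<Longrightarrow> 1 \<le> j \<Longrightarrow> j \<le> H \<Longrightarrow>
    \<exists>S' Ob'. positive_run mu Tr Em S' Ob' Ac H \<and> (\<forall>i<j. S' i = S i \<and> Ob' i = Ob i)"
proof (induction "H - j" arbitrary: j S Ob)
  case 0
  then show ?case by auto
next
  case (Suc d)
  then have "j < H" by simp
  with positive_run_Suc[OF P Suc.prems(1,2)] obtain s o'
    where run: "positive_run mu Tr Em (S(j := s)) (Ob(j := o')) Ac (Suc j)" by blast
  have "d = H - Suc j" using Suc.hyps(2) by simp
  from Suc.hyps(1)[OF this run] \<open>j < H\<close> obtain S' Ob' where
    "positive_run mu Tr Em S' Ob' Ac H" "\<forall>i<Suc j. S' i = (S(j := s)) i \<and> Ob' i = (Ob(j := o')) i"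
    by auto
  then show ?case by (intro exI[of _ S'] exI[of _ Ob']) auto
qed

lemma positive_path_of_fwd:
  fixes Tr :: "nat \<Rightarrow> 's::finite \<Rightarrow> 'a::finite \<Rightarrow> 's \<Rightarrow> real"
    and Em :: "nat \<Rightarrow> 's \<Rightarrow> 'o::finite \<Rightarrow> real"
  assumes P: "is_pomdp H mu Tr Em"
  shows "length Pl < H \<Longrightarrow> 0 < fwd Tr Em 1 mu Pl s \<Longrightarrow>
    \<exists>S. S (length Pl) = s \<and> 0 < mu (S 0) \<and>
      (\<forall>i<length Pl. 0 < Em (Suc i) (S i) (fst (Pl ! i)) \<and> 0 < Tr (Suc i) (S i) (snd (Pl ! i)) (S (Suc i)))"
proof (induction Pl arbitrary: s rule: rev_induct)
  case Nil
  then show ?case by (intro exI[of _ "\<lambda>_. s"]) simp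
next
  case (snoc p Pl)
  obtain ob a where p: "p = (ob, a)" by (cases p)
  let ?n = "length Pl"
  have "0 < (\<Sum>x\<in>UNIV. fwd Tr Em 1 mu Pl x * Em (Suc ?n) x ob * Tr (Suc ?n) x a s)"
    using snoc.prems by (simp add: fwd_append p)
  then obtain x where x: "0 < fwd Tr Em 1 mu Pl x * Em (Suc ?n) x ob * Tr (Suc ?n) x a s"
    by (rule sum_posE)
  have "0 \<le> Em (Suc ?n) x ob" "0 \<le> Tr (Suc ?n) x a s"
    using snoc.prems P by (auto simp: is_pomdp_def)
  with x have pos: "0 < fwd Tr Em 1 mu Pl x" "0 < Em (Suc ?n) x ob" "0 < Tr (Suc ?n) x a s"
    by (auto simp: zero_less_mult_iff)
  from snoc.IH[of x] snoc.prems pos obtain S where S: "S ?n = x" "0 < mu (S 0)"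
    "\<forall>i<?n. 0 < Em (Suc i) (S i) (fst (Pl ! i)) \<and> 0 < Tr (Suc i) (S i) (snd (Pl ! i)) (S (Suc i))"
    by auto
  show ?case
  proof (intro exI[of _ "S(Suc ?n := s)"] conjI allI impI)
    fix i assume "i < length (Pl @ [p])"
    then show "0 < Em (Suc i) ((S(Suc ?n := s)) i) (fst ((Pl @ [p]) ! i))"
      and "0 < Tr (Suc i) ((S(Suc ?n := s)) i) (snd ((Pl @ [p]) ! i)) ((S(Suc ?n := s)) (Suc i))"
      using S pos p by (auto simp: nth_append less_Suc_eq)
  qed (use S in auto)
qed

lemma decoder_state_eq:
  fixes Tr :: "nat \<Rightarrow> 's::finite \<Rightarrow> 'a::finite \<Rightarrow> 's \<Rightarrow> real"
    and Em :: "nat \<Rightarrow> 's \<Rightarrow> 'o::finite \<Rightarrow> real"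
  assumes P: "is_pomdp H mu Tr Em" and dec: "decoder m H mu Tr Em dec"
    and n: "length Pl < H" and nz: "fwd Tr Em 1 mu Pl s * Em (Suc (length Pl)) s ob \<noteq> 0"
  shows "s = dec (Suc (length Pl)) (drop (Suc (length Pl) - m) Pl) ob"
proof -
  let ?n = "length Pl"
  have "0 \<le> fwd Tr Em 1 mu Pl s"
    by (rule fwd_nonneg[OF P]) (use P n in \<open>auto simp: is_pomdp_def\<close>)
  moreover have "0 \<le> Em (Suc ?n) s ob" using P n unfolding is_pomdp_def by simp
  ultimately have pos: "0 < fwd Tr Em 1 mu Pl s" "0 < Em (Suc ?n) s ob"
    using nz by (auto simp: zero_less_mult_iff order_less_le)
  obtain S where S: "S ?n = s" "0 < mu (S 0)"
    "\<forall>i<?n. 0 < Em (Suc i) (S i) (fst (Pl ! i)) \<and> 0 < Tr (Suc i) (S i) (snd (Pl ! i)) (S (Suc i))"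
    using positive_path_of_fwd[OF P n pos(1)] by blast
  define Ob where "Ob i = (if i < ?n then fst (Pl ! i) else ob)" for i
  define Ac where "Ac i = snd (Pl ! i)" for i
  have "positive_run mu Tr Em S Ob Ac (Suc ?n)"
    unfolding positive_run_def using S pos(2) by (auto simp: Ob_def Ac_def less_Suc_eq) (metis lessI)
  from positive_run_extend[OF P this] n obtain S' Ob' where run: "positive_run mu Tr Em S' Ob' Ac H"
    and agree: "\<forall>i<Suc ?n. S' i = S i \<and> Ob' i = Ob i"
    by auto
  define ss where "ss = map S' [0..<H]"
  define os where "os = map Ob' [0..<H]"
  define as where "as = map Ac [0..<H - 1]"
  have "reachable_traj H mu Tr Em ss os as"
    using reachable_traj_of_positive_run[OF run] n by (simp add: ss_def os_def as_def)
  moreover have "1 \<le> Suc ?n \<and> Suc ?n \<le> H" using n by simp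
  ultimately have "ss ! (Suc ?n - 1) = dec (Suc ?n) (window_pairs m (Suc ?n) os as) (os ! (Suc ?n - 1))"
    using dec unfolding decoder_def by blast
  moreover have "ss ! ?n = s" "os ! ?n = ob"
    using S agree n by (simp_all add: ss_def os_def Ob_def)
  moreover have "take ?n (zip os as) = Pl"
    using agree n by (intro nth_equalityI) (auto simp: os_def as_def Ob_def Ac_def)
  ultimately show ?thesis unfolding window_pairs_def by simp
qed

lemma long_test_in_span:
  fixes Tr :: "nat \<Rightarrow> 's::finite \<Rightarrow> 'a::finite \<Rightarrow> 's \<Rightarrow> real"
    and Em :: "nat \<Rightarrow> 's \<Rightarrow> 'o::finite \<Rightarrow> real"
    and t :: "('o, 'a) test"
  assumes P: "is_pomdp H mu Tr Em" and dec: "decoder m H mu Tr Em dec"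
    and h: "1 \<le> h" and m: "1 \<le> m" "m \<le> length (fst t)" and tH: "h + length (fst t) \<le> H"
  shows "test_in_span Tr Em h (fwd Tr Em 1 mu ` {tau. length tau = h - 1}) (all_tests_len m) t"
proof -
  obtain ps ob where "t = (ps, ob)" by (cases t)
  moreover have "m - 1 < length ps" using m \<open>t = (ps, ob)\<close> by simp
  moreover obtain o1 a1 where "ps ! (m - 1) = (o1, a1)" by (cases "ps ! (m - 1)")
  ultimately have t: "t = (take (m - 1) ps @ (o1, a1) # drop m ps, ob)"
    using id_take_nth_drop[of "m - 1" ps] m by simp
  define ps1 where "ps1 = take (m - 1) ps"
  define k where "k = h + (m - 1)"
  define G where "G s = test_weight Tr Em (Suc k) (Tr k s a1) (drop m ps, ob)" for s
  have ps1: "length ps1 = m - 1" using \<open>m - 1 < length ps\<close> by (simp add: ps1_def)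
  have k: "1 \<le> k" "k < H" using h m tH \<open>t = (ps, ob)\<close> by (auto simp: k_def)
  show ?thesis
  proof (rule test_in_span_multiple[OF finite_all_tests_len])
    show "(ps1, o1) \<in> all_tests_len m" using ps1 by (simp add: all_tests_len_def)
    fix b assume "b \<in> fwd Tr Em 1 mu ` {tau. length tau = h - 1}"
    then obtain tau where tau: "length tau = h - 1" and b: "b = fwd Tr Em 1 mu tau" by blast
    define X where "X s = fwd Tr Em h b ps1 s * Em k s o1" for s
    have weight_t: "test_weight Tr Em h b t = (\<Sum>s\<in>UNIV. X s * G s)"
      unfolding t ps1_def[symmetric] test_weight_append test_weight_Cons X_def G_def k_def
      using ps1 by (simp add: mult.assoc)
    have weight_u: "test_weight Tr Em h b (ps1, o1) = (\<Sum>s\<in>UNIV. X s)"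
      using test_weight_append[of Tr Em h b ps1 "[]" o1] ps1 by (simp add: test_weight_Nil X_def k_def)
    have support: "X s = 0" if "s \<noteq> dec k ps1 o1" for s
    proof (rule ccontr)
      assume "X s \<noteq> 0"
      have "fwd Tr Em h b ps1 = fwd Tr Em 1 mu (tau @ ps1)" and len: "Suc (length (tau @ ps1)) = k"
        using tau h ps1 by (simp_all add: b fwd_append k_def)
      moreover have "length (tau @ ps1) < H" using len k by simp
      ultimately have "s = dec k (drop (k - m) (tau @ ps1)) o1"
        using decoder_state_eq[OF P dec, of "tau @ ps1" s o1] \<open>X s \<noteq> 0\<close> unfolding X_def len by simp
      also have "drop (k - m) (tau @ ps1) = ps1" using tau h m by (simp add: k_def)
      finally show False using that by simp
    qed
    show "test_weight Tr Em h b t = G (dec k ps1 o1) * test_weight Tr Em h b (ps1, o1)"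
      unfolding weight_t weight_u by (rule sum_mult_concentrated) (use support in auto)
  qed
qed

theorem lemma13:
  fixes H m :: nat
    and mu :: "'s::finite \<Rightarrow> real"
    and Tr :: "nat \<Rightarrow> 's \<Rightarrow> 'a::finite \<Rightarrow> 's \<Rightarrow> real"
    and Em :: "nat \<Rightarrow> 's \<Rightarrow> 'o::finite \<Rightarrow> real"
  assumes "is_pomdp H mu Tr Em"
    and "1 \<le> m"
    and "m_step_decodable m H mu Tr Em"
  shows "\<forall>h. 1 \<le> h \<and> h + m \<le> H + 1 \<longrightarrow>
           core_test_set H mu Tr Em h (all_tests_len m :: ('o, 'a) test set)"
proof (intro allI impI)
  fix h assume h: "1 \<le> h \<and> h + m \<le> H + 1"
  obtain dec where dec: "decoder m H mu Tr Em dec"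
    using assms(3) unfolding m_step_decodable_def decoder_def by blast
  show "core_test_set H mu Tr Em h (all_tests_len m :: ('o, 'a) test set)"
  proof (rule core_test_set_if_in_span[OF _ finite_all_tests_len])
    fix t :: "('o, 'a) test" assume "h + length (fst t) \<le> H"
    then show "test_in_span Tr Em h (fwd Tr Em 1 mu ` {tau. length tau = h - 1}) (all_tests_len m) t"
      using short_test_in_span[OF assms(1)] long_test_in_span[OF assms(1) dec] h assms(2)
      by (cases "length (fst t) < m") auto
  qed (use h in simp)
qed

end
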